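(* Let $P\in LC(\tau)$ for a skeleton $\tau$ on a countable alphabet $A$, with good probabilistic skeleton $(\tau,p)$ and good coalescence time $\bar\theta[0]$. Then for every integer $i\ge0$, $$\mathbb P(L_0>i)\le\big(\mathbb E|\bar\theta[0]|+1\big)\,\mathbb P\big(U_0\ge\alpha_i^{c_\tau^{-1}}\big),$$ and moreover $\mathbb P(L_0\le i)\ge\alpha_{-1}$. Consequently $\mathbb P(L_0\le i)\ge\max\{1-(\mathbb E|\bar\theta[0]|+1)\mathbb P(U_0\ge\alpha_i^{c_\tau^{-1}}),\alpha_{-1}\}$.
   Context: Notation. $A$ is a countable alphabet, enumerated as $\{1,2,\dots\}$ (or an initial segment). A past is $\underline a=\ldots a_{-2}a_{-1}\in A^{-\mathbb N}$; concatenation puts the older part on the left ($\underline z\,w\,v$ is the past ending with $v$, preceded by $w$, preceded by $\underline z$). A kernel is $P:A\times A^{-\mathbb N}\to[0,1]$ with $\sum_aP(a|\underline a)=1$. $\alpha(a):=\inf_{\underline z}P(a|\underline z)$, $\alpha_{-1}:=\sum_a\alpha(a)$. Context trees: a context tree is $\tau\subset A^{-\mathbb N}\cup A^\star$ such that every past has exactly one element of $\tau$ as suffix, denoted $c_\tau(\underline a)$, and no element is a proper suffix of another; ${}^{<\infty}\tau$, ${}^\infty\tau$ are its finite/infinite elements. A skeleton is a context tree which is the smallest context tree containing its infinite elements ($\{\emptyset\}$ is also a skeleton). For $v\in{}^{<\infty}\tau$, $k\ge0$: $\alpha_k^v:=\inf_{w\in A^k}\sum_a\inf_{\underline z}P(a|\underline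 z\,w\,v)$; $P\in LC(\tau)$ if $\alpha_k^v\to1$ for all finite $v\in\tau$; for integers $i,k\ge0$, $\alpha_k^i:=\inf\{\alpha_k^v:v\in{}^{<\infty}\tau,|v|\le i\}$ (inf of empty set $=1$), and $\alpha^i_{-1}:=\alpha_{-1}$. Probabilistic skeleton $(\tau,p)$: $p(a|v)=\inf_{\underline z}P(a|\underline zv)$ for finite $v$, $p(a|v)=P(a|v)$ for infinite $v$. $\mathbf U=(U_i)$ i.i.d. uniform on $[0,1)$. $Y_i:=a$ if $\sum_{b<a}\alpha(b)\le U_i<\sum_{b\le a}\alpha(b)$, $Y_i:=\star$ if $U_i\ge\alpha_{-1}$; $Y_i(\mathbf a):=Y_i$ if $Y_i\in A$, else $a_i$; $c^n_\tau:=\sup_{\mathbf a}|c_\tau(\ldots Y_{n-1}(\mathbf a)Y_n(\mathbf a))|$; $\bar\theta[m]:=\sup\{i\le m:\forall j\in\{i,\dots,m\},\ Y_j\in A\text{ or }c^j_\tau\le j-i\}$ (sup of empty set $=-\infty$); $(\tau,p)$ is good if $\mathbb E|\bar\theta[0]|<\infty$. Block construction: $\theta^{-1}:=1$, $\theta^k:=\bar\theta[\theta^{k-1}-1]$ for $k\ge0$, $B_k:=\{\theta^k,\dots,\theta^{k-1}-1\}$. For $l\in\mathbb Z$, $\zeta_l:=0$ if $U_l<\alpha_{-1}$, and otherwise $\zeta_l$ is the integer $k\ge0$ with $\alpha^{c^{l-1}_\tau}_{k-1}\le U_l<\alpha^{c^{l-1}_\tau}_k$ ($\zeta_l:=\infty$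 if there is none). $L_k:=\sup_{l\in B_k}\zeta_l$. *)

theory Defs
  imports "HOL-Probability.Probability"
begin

(* Encoding conventions:
   - the alphabet is a set A of naturals ({1,2,...} or an initial segment {1..n});
   - a past  ... a_{-2} a_{-1}  is a function x :: nat => nat with  x j = a_{-(j+1)};
   - a finite string v (a context) is a list stored MOST RECENT FIRST:
     v ! 0 is the last (most recent) letter.  Thus v is a suffix of the past x
     iff x j = v ! j for all j < length v, and the past  z w v  is  cat (v @ w) z. *)

type_synonym past = "nat \<Rightarrow> nat"

datatype ctx = Fin "nat list" | Infc "nat \<Rightarrow> nat"

definition Pasts :: "nat set \<Rightarrow> past set" where
  "Pasts A = {x. \<forall>j. x j \<in> A}"

definition cat :: "nat list \<Rightarrow> past \<Rightarrow> past" where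
  "cat vs z = (\<lambda>j. if j < length vs then vs ! j else z (j - length vs))"

fun ctx_suffix :: "ctx \<Rightarrow> ctx \<Rightarrow> bool" where
  "ctx_suffix (Fin v) (Fin w) = (length v \<le> length w \<and> take (length v) w = v)"
| "ctx_suffix (Fin v) (Infc x) = (\<forall>j<length v. x j = v ! j)"
| "ctx_suffix (Infc x) (Infc y) = (x = y)"
| "ctx_suffix (Infc x) (Fin w) = False"

fun ctx_over :: "nat set \<Rightarrow> ctx \<Rightarrow> bool" where
  "ctx_over A (Fin v) = (set v \<subseteq> A)"
| "ctx_over A (Infc x) = (x \<in> Pasts A)"

fun ctx_len :: "ctx \<Rightarrow> enat" where
  "ctx_len (Fin v) = enat (length v)"
| "ctx_len (Infc x) = \<infinity>"

definition context_tree :: "nat set \<Rightarrow> ctx set \<Rightarrow> bool" where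
  "context_tree A \<tau> \<longleftrightarrow>
     (\<forall>c\<in>\<tau>. ctx_over A c) \<and>
     (\<forall>x\<in>Pasts A. \<exists>!c. c \<in> \<tau> \<and> ctx_suffix c (Infc x)) \<and>
     (\<forall>c\<in>\<tau>. \<forall>d\<in>\<tau>. \<not> (ctx_suffix c d \<and> c \<noteq> d))"

definition inf_part :: "ctx set \<Rightarrow> ctx set" where
  "inf_part \<tau> = {c \<in> \<tau>. \<exists>x. c = Infc x}"

definition coarser :: "ctx set \<Rightarrow> ctx set \<Rightarrow> bool" where
  "coarser \<tau> \<tau>' \<longleftrightarrow> (\<forall>d\<in>\<tau>'. \<exists>c\<in>\<tau>. ctx_suffix c d)"

definition skeleton :: "nat set \<Rightarrow> ctx set \<Rightarrow> bool" where
  "skeleton A \<tau> \<longleftrightarrow> context_tree A \<tau> \<and>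
     (\<forall>\<tau>'. context_tree A \<tau>' \<and> inf_part \<tau> \<subseteq> \<tau>' \<longrightarrow> coarser \<tau> \<tau>')"

definition c_tau :: "ctx set \<Rightarrow> past \<Rightarrow> ctx" where
  "c_tau \<tau> x = (THE c. c \<in> \<tau> \<and> ctx_suffix c (Infc x))"

definition alpha :: "(nat \<Rightarrow> past \<Rightarrow> real) \<Rightarrow> nat set \<Rightarrow> nat \<Rightarrow> real" where
  "alpha P A a = (INF z\<in>Pasts A. P a z)"

definition alpha_m1 :: "(nat \<Rightarrow> past \<Rightarrow> real) \<Rightarrow> nat set \<Rightarrow> real" where
  "alpha_m1 P A = infsum (alpha P A) A"

definition alpha_kv :: "(nat \<Rightarrow> past \<Rightarrow> real) \<Rightarrow> nat set \<Rightarrow> nat \<Rightarrow> nat list \<Rightarrow> real" where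
  "alpha_kv P A k v =
     (INF w\<in>{w. length w = k \<and> set w \<subseteq> A}.
        infsum (\<lambda>a. INF z\<in>Pasts A. P a (cat (v @ w) z)) A)"

definition LC :: "(nat \<Rightarrow> past \<Rightarrow> real) \<Rightarrow> nat set \<Rightarrow> ctx set \<Rightarrow> bool" where
  "LC P A \<tau> \<longleftrightarrow> (\<forall>v. Fin v \<in> \<tau> \<longrightarrow> (\<lambda>k. alpha_kv P A k v) \<longlonglongrightarrow> 1)"

definition alpha_ki :: "(nat \<Rightarrow> past \<Rightarrow> real) \<Rightarrow> nat set \<Rightarrow> ctx set \<Rightarrow> enat \<Rightarrow> int \<Rightarrow> real" where
  "alpha_ki P A \<tau> i k =
     (if k < 0 then alpha_m1 P A
      else (let S = {alpha_kv P A (nat k) v | v. Fin v \<in> \<tau> \<and> enat (length v) \<le> i}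
            in if S = {} then 1 else Inf S))"

(* Y_i : None stands for \<star> *)
definition Yv :: "(nat \<Rightarrow> past \<Rightarrow> real) \<Rightarrow> nat set \<Rightarrow> (int \<Rightarrow> 'w \<Rightarrow> real) \<Rightarrow> int \<Rightarrow> 'w \<Rightarrow> nat option" where
  "Yv P A U i \<omega> =
     (if \<exists>a\<in>A. sum (alpha P A) {b\<in>A. b < a} \<le> U i \<omega> \<and> U i \<omega> < sum (alpha P A) {b\<in>A. b \<le> a}
      then Some (THE a. a \<in> A \<and> sum (alpha P A) {b\<in>A. b < a} \<le> U i \<omega> \<and> U i \<omega> < sum (alpha P A) {b\<in>A. b \<le> a})
      else None)"

definition Yfill :: "(nat \<Rightarrow> past \<Rightarrow> real) \<Rightarrow> nat set \<Rightarrow> (int \<Rightarrow> 'w \<Rightarrow> real) \<Rightarrow> int \<Rightarrow> (int \<Rightarrow> nat) \<Rightarrow> 'w \<Rightarrow> nat" where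
  "Yfill P A U i a \<omega> = (case Yv P A U i \<omega> of Some b \<Rightarrow> b | None \<Rightarrow> a i)"

(* c^n_\<tau> ; the past  ... Y_{n-1}(a) Y_n(a)  is  j \<mapsto> Y_{n-j}(a) *)
definition cn :: "(nat \<Rightarrow> past \<Rightarrow> real) \<Rightarrow> nat set \<Rightarrow> ctx set \<Rightarrow> (int \<Rightarrow> 'w \<Rightarrow> real) \<Rightarrow> int \<Rightarrow> 'w \<Rightarrow> enat" where
  "cn P A \<tau> U n \<omega> =
     (SUP a\<in>{a :: int \<Rightarrow> nat. \<forall>i. a i \<in> A}.
        ctx_len (c_tau \<tau> (\<lambda>j. Yfill P A U (n - int j) a \<omega>)))"

(* \<theta>bar[m]; value -\<infinity> when the set is empty *)
definition theta_bar :: "(nat \<Rightarrow> past \<Rightarrow> real) \<Rightarrow> nat set \<Rightarrow> ctx set \<Rightarrow> (int \<Rightarrow> 'w \<Rightarrow> real) \<Rightarrow> int \<Rightarrow> 'w \<Rightarrow> ereal" where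
  "theta_bar P A \<tau> U m \<omega> =
     Sup ((\<lambda>i. ereal (real_of_int i)) `
       {i. i \<le> m \<and> (\<forall>j\<in>{i..m}. Yv P A U j \<omega> \<noteq> None \<or> cn P A \<tau> U j \<omega> \<le> enat (nat (j - i)))})"

(* thetaB k = \<theta>^{k-1}:  \<theta>^{-1} = 1, \<theta>^k = \<theta>bar[\<theta>^{k-1} - 1]
   (convention: stays -\<infinity> once -\<infinity> is reached) *)
fun thetaB :: "(nat \<Rightarrow> past \<Rightarrow> real) \<Rightarrow> nat set \<Rightarrow> ctx set \<Rightarrow> (int \<Rightarrow> 'w \<Rightarrow> real) \<Rightarrow> nat \<Rightarrow> 'w \<Rightarrow> ereal" where
  "thetaB P A \<tau> U 0 \<omega> = 1"
| "thetaB P A \<tau> U (Suc k) \<omega> =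
     (if thetaB P A \<tau> U k \<omega> = -\<infinity> then -\<infinity>
      else theta_bar P A \<tau> U (\<lfloor>real_of_ereal (thetaB P A \<tau> U k \<omega>)\<rfloor> - 1) \<omega>)"

(* B_k = {\<theta>^k, ..., \<theta>^{k-1} - 1} *)
definition block :: "(nat \<Rightarrow> past \<Rightarrow> real) \<Rightarrow> nat set \<Rightarrow> ctx set \<Rightarrow> (int \<Rightarrow> 'w \<Rightarrow> real) \<Rightarrow> nat \<Rightarrow> 'w \<Rightarrow> int set" where
  "block P A \<tau> U k \<omega> =
     {l. thetaB P A \<tau> U (Suc k) \<omega> \<le> ereal (real_of_int l) \<and>
         ereal (real_of_int l) \<le> thetaB P A \<tau> U k \<omega> - 1}"

definition zeta :: "(nat \<Rightarrow> past \<Rightarrow> real) \<Rightarrow> nat set \<Rightarrow> ctx set \<Rightarrow> (int \<Rightarrow> 'w \<Rightarrow> real) \<Rightarrow> int \<Rightarrow> 'w \<Rightarrow> enat" where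
  "zeta P A \<tau> U l \<omega> =
     (if U l \<omega> < alpha_m1 P A then 0
      else if \<exists>k::nat. alpha_ki P A \<tau> (cn P A \<tau> U (l - 1) \<omega>) (int k - 1) \<le> U l \<omega> \<and>
                       U l \<omega> < alpha_ki P A \<tau> (cn P A \<tau> U (l - 1) \<omega>) (int k)
      then enat (LEAST k::nat. alpha_ki P A \<tau> (cn P A \<tau> U (l - 1) \<omega>) (int k - 1) \<le> U l \<omega> \<and>
                       U l \<omega> < alpha_ki P A \<tau> (cn P A \<tau> U (l - 1) \<omega>) (int k))
      else \<infinity>)"

definition Lk :: "(nat \<Rightarrow> past \<Rightarrow> real) \<Rightarrow> nat set \<Rightarrow> ctx set \<Rightarrow> (int \<Rightarrow> 'w \<Rightarrow> real) \<Rightarrow> nat \<Rightarrow> 'w \<Rightarrow> enat" where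
  "Lk P A \<tau> U k \<omega> = (SUP l\<in>block P A \<tau> U k \<omega>. zeta P A \<tau> U l \<omega>)"

(* E|\<theta>bar[0]| as an extended nonnegative real (\<infinity> if \<theta>bar[0] = -\<infinity> with positive probability) *)
definition E_abs_theta0 :: "'w measure \<Rightarrow> (nat \<Rightarrow> past \<Rightarrow> real) \<Rightarrow> nat set \<Rightarrow> ctx set \<Rightarrow> (int \<Rightarrow> 'w \<Rightarrow> real) \<Rightarrow> ennreal" where
  "E_abs_theta0 M P A \<tau> U = (\<integral>\<^sup>+ \<omega>. e2ennreal \<bar>theta_bar P A \<tau> U 0 \<omega>\<bar> \<partial>M)"

end

theory Submission imports Defs begin

(* The event  L_0 > i  forces some site -m of the first block (that is, theta_bar[0] <= -m)
   to have  zeta_{-m} > i, and the latter implies  U_{-m} >= alpha_i^{c^{-m-1}}.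
   The event  theta_bar[0] <= -m  is a function of U_{-m+1}, ..., U_0 only, while
   U_{-m} >= alpha_i^{c^{-m-1}}  is a function of U_{-m}, U_{-m-1}, ... only; hence the two
   are independent, and by shift invariance of the i.i.d. sequence the second one has the
   probability of  U_0 >= alpha_i^{c^{-1}}.  Summing over m and using
   sum_m P(theta_bar[0] <= -m) <= 1 + E|theta_bar[0]|  gives the first bound.
   For the second bound, U_0 < alpha_{-1} makes Y_0 a letter, so theta_bar[0] = 0 and L_0 = 0. *)

lemma count_below_le_abs:
  fixes X :: ereal assumes X_nonpos: "X \<le> 0"
  shows "(\<Sum>m. if X \<le> ereal (- real (Suc m)) then 1 else 0 :: ennreal) \<le> e2ennreal \<bar>X\<bar>"
proof (cases X)
  case (real t)
  define K where "K = nat \<lfloor>- t\<rfloor>"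
  have t_nonpos: "t \<le> 0" using X_nonpos real by simp
  have "(\<Sum>m. if X \<le> ereal (- real (Suc m)) then 1 else 0 :: ennreal) =
      (\<Sum>m\<in>{..<K}. if X \<le> ereal (- real (Suc m)) then 1 else 0 :: ennreal)"
  proof (rule suminf_finite)
    have "- t < real K + 1" unfolding K_def using t_nonpos by linarith
    moreover fix m assume "m \<notin> {..<K}"
    ultimately have "- t < real m + 1" by simp
    then show "(if X \<le> ereal (- real (Suc m)) then 1 else 0 :: ennreal) = 0" using real by auto
  qed simp
  also have "\<dots> \<le> (\<Sum>m\<in>{..<K}. 1 :: ennreal)" by (rule sum_mono) auto
  also have "\<dots> = ennreal (real K)" by (simp add: ennreal_of_nat_eq_real_of_nat)
  also have "\<dots> \<le> ennreal (- t)" unfolding K_def using t_nonpos by (intro ennreal_leI) simp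
  also have "\<dots> = e2ennreal \<bar>X\<bar>" using real t_nonpos by simp
  finally show ?thesis .
qed (use X_nonpos in simp_all)

(* A coordinate of a product space is measurable even outside the index set,
   where it is constant on the space. *)
lemma component_measurable:
  "(\<lambda>r. r j) \<in> borel_measurable (PiM J (\<lambda>_. borel :: 'a::topological_space measure))"
proof (cases "j \<in> J")
  case False
  have "(\<lambda>r. undefined) \<in> borel_measurable (PiM J (\<lambda>_. borel :: 'a measure))" by simp
  then show ?thesis
    by (rule measurable_cong[THEN iffD1, rotated]) (use False in \<open>auto simp: space_PiM PiE_def extensional_def\<close>)
qed simp

lemma (in prob_space) indep_events_disjoint_coordinates:
  fixes X :: "'i \<Rightarrow> 'a \<Rightarrow> 'b"
  assumes indep: "indep_vars (\<lambda>_. N) X UNIV" and disjoint: "I \<inter> J = {}"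
    and meas_p: "Measurable.pred (PiM I (\<lambda>_. N)) p" and local_p: "\<And>r. p (restrict r I) = p r"
    and meas_q: "Measurable.pred (PiM J (\<lambda>_. N)) q" and local_q: "\<And>r. q (restrict r J) = q r"
  shows "prob ({\<omega>\<in>space M. p (\<lambda>j. X j \<omega>)} \<inter> {\<omega>\<in>space M. q (\<lambda>j. X j \<omega>)}) =
         prob {\<omega>\<in>space M. p (\<lambda>j. X j \<omega>)} * prob {\<omega>\<in>space M. q (\<lambda>j. X j \<omega>)}"
proof -
  define K where "K = (\<lambda>b. if b then I else J)"
  have "indep_vars (\<lambda>b. PiM (K b) (\<lambda>_. N)) (\<lambda>b \<omega>. restrict (\<lambda>j. X j \<omega>) (K b)) UNIV"
    by (rule indep_vars_restrict[OF indep]) (use disjoint in \<open>auto simp: disjoint_family_on_def K_def\<close>)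
  moreover have "(\<lambda>b. PiM (K b) (\<lambda>_. N)) = case_bool (PiM I (\<lambda>_. N)) (PiM J (\<lambda>_. N))"
    "(\<lambda>b \<omega>. restrict (\<lambda>j. X j \<omega>) (K b)) = case_bool (\<lambda>\<omega>. restrict (\<lambda>j. X j \<omega>) I) (\<lambda>\<omega>. restrict (\<lambda>j. X j \<omega>) J)"
    by (auto simp: K_def split: bool.split)
  ultimately have restrictions_indep: "indep_var (PiM I (\<lambda>_. N)) (\<lambda>\<omega>. restrict (\<lambda>j. X j \<omega>) I)
      (PiM J (\<lambda>_. N)) (\<lambda>\<omega>. restrict (\<lambda>j. X j \<omega>) J)"
    unfolding indep_var_def by simp
  define SI where "SI = {r \<in> space (PiM I (\<lambda>_. N)). p r}"
  define SJ where "SJ = {r \<in> space (PiM J (\<lambda>_. N)). q r}"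
  have SI: "SI \<in> sets (PiM I (\<lambda>_. N))" and SJ: "SJ \<in> sets (PiM J (\<lambda>_. N))"
    unfolding SI_def SJ_def using meas_p meas_q by (auto intro: predE)
  have in_space: "restrict f J \<in> space (PiM J (\<lambda>_. N))" if "\<And>j. f j \<in> space N" for f :: "'i \<Rightarrow> 'b" and J
    using that by (simp add: space_PiM)
  have X_space: "X j \<omega> \<in> space N" if "\<omega> \<in> space M" for j \<omega>
    using indep that unfolding indep_vars_def by (auto dest: measurable_space)
  have preimage_p: "(\<lambda>\<omega>. restrict (\<lambda>j. X j \<omega>) I) -` SI \<inter> space M = {\<omega>\<in>space M. p (\<lambda>j. X j \<omega>)}"
    and preimage_q: "(\<lambda>\<omega>. restrict (\<lambda>j. X j \<omega>) J) -` SJ \<inter> space M = {\<omega>\<in>space M. q (\<lambda>j. X j \<omega>)}"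
    unfolding SI_def SJ_def using local_p local_q in_space X_space by auto
  then have "(\<lambda>\<omega>. (restrict (\<lambda>j. X j \<omega>) I, restrict (\<lambda>j. X j \<omega>) J)) -` (SI \<times> SJ) \<inter> space M =
     {\<omega>\<in>space M. p (\<lambda>j. X j \<omega>)} \<inter> {\<omega>\<in>space M. q (\<lambda>j. X j \<omega>)}"
    by auto
  then show ?thesis using indep_varD[OF restrictions_indep SI SJ] unfolding preimage_p preimage_q by simp
qed

lemma (in prob_space) distr_reindexed_iid:
  fixes X :: "'i \<Rightarrow> 'a \<Rightarrow> 'b::topological_space" and f :: "'k \<Rightarrow> 'i"
  assumes indep: "indep_vars (\<lambda>_. borel) X UNIV" and ident: "\<And>j. distr M borel (X j) = D"
    and inj: "inj f"
  shows "distr M (PiM UNIV (\<lambda>_. D)) (\<lambda>\<omega> k. X (f k) \<omega>) = PiM UNIV (\<lambda>_. D)"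
proof -
  have X_meas: "X j \<in> borel_measurable M" for j using indep unfolding indep_vars_def by auto
  have sets_D: "sets D = sets (borel :: 'b measure)" using ident[of undefined] by auto
  have D: "prob_space D" using ident[of undefined] X_meas by (metis prob_space_distr)
  have sets_Pi: "sets (PiM I (\<lambda>_. D)) = sets (PiM I (\<lambda>_. borel :: 'b measure))" for I :: "'c set"
    using sets_D by (intro sets_PiM_cong) auto
  have "distr M (PiM UNIV (\<lambda>_. borel)) (\<lambda>\<omega>. \<lambda>i\<in>UNIV. X i \<omega>) = PiM UNIV (\<lambda>i. distr M borel (X i))"
    using indep_vars_iff_distr_eq_PiM'[where I=UNIV and M'="\<lambda>_. borel" and X=X] indep X_meas by auto
  then have joint_law: "distr M (PiM UNIV (\<lambda>_. D)) (\<lambda>\<omega> j. X j \<omega>) = PiM UNIV (\<lambda>_. D)"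
    by (simp add: ident restrict_UNIV cong: distr_cong[OF refl sets_Pi refl])
  have "(\<lambda>\<omega> j. X j \<omega>) \<in> M \<rightarrow>\<^sub>M PiM UNIV (\<lambda>_. borel)"
    by (rule measurable_PiM_single') (auto simp: X_meas)
  then have joint_meas: "(\<lambda>\<omega> j. X j \<omega>) \<in> M \<rightarrow>\<^sub>M PiM UNIV (\<lambda>_. D)"
    using measurable_cong_sets[OF refl sets_Pi] by blast
  define R where "R = (\<lambda>\<omega>. \<lambda>n\<in>UNIV. \<omega> (f n) :: 'b)"
  have R_law: "distr (PiM UNIV (\<lambda>_. D)) (PiM UNIV (\<lambda>_. D)) R = PiM UNIV (\<lambda>_. D)"
    unfolding R_def by (rule distr_PiM_reindex[OF D]) (use inj in auto)
  have R_meas: "R \<in> PiM UNIV (\<lambda>_. D) \<rightarrow>\<^sub>M PiM UNIV (\<lambda>_. D)"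
    unfolding R_def by (rule measurable_PiM_single') (auto simp: space_PiM)
  have "distr M (PiM UNIV (\<lambda>_. D)) (\<lambda>\<omega> k. X (f k) \<omega>) = distr M (PiM UNIV (\<lambda>_. D)) (R \<circ> (\<lambda>\<omega> j. X j \<omega>))"
    by (rule distr_cong) (auto simp: R_def)
  also have "\<dots> = distr (distr M (PiM UNIV (\<lambda>_. D)) (\<lambda>\<omega> j. X j \<omega>)) (PiM UNIV (\<lambda>_. D)) R"
    by (rule distr_distr[symmetric, OF R_meas joint_meas])
  finally show ?thesis unfolding joint_law R_law .
qed

lemma (in prob_space) prob_reindexed_iid:
  fixes X :: "'i \<Rightarrow> 'a \<Rightarrow> 'b::topological_space" and f :: "'k \<Rightarrow> 'i"
  assumes indep: "indep_vars (\<lambda>_. borel) X UNIV" and ident: "\<And>j. distr M borel (X j) = D"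
    and inj: "inj f" and Q: "Measurable.pred (PiM UNIV (\<lambda>_. borel)) Q"
  shows "prob {\<omega>\<in>space M. Q (\<lambda>k. X (f k) \<omega>)} = measure (PiM UNIV (\<lambda>_. D)) {s\<in>space (PiM UNIV (\<lambda>_. D)). Q s}"
proof -
  have X_meas: "X j \<in> borel_measurable M" for j using indep unfolding indep_vars_def by auto
  have "sets D = sets (borel :: 'b measure)" using ident[of undefined] by auto
  then have sets_Pi: "sets (PiM UNIV (\<lambda>_. D)) = sets (PiM UNIV (\<lambda>_::'k. borel :: 'b measure))"
    by (intro sets_PiM_cong) auto
  have "{s\<in>space (PiM UNIV (\<lambda>_::'k. borel :: 'b measure)). Q s} \<in> sets (PiM UNIV (\<lambda>_. borel))"
    using Q by (rule predE)
  then have Q_set: "{s\<in>space (PiM UNIV (\<lambda>_. D)). Q s} \<in> sets (PiM UNIV (\<lambda>_. D))"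
    using sets_Pi sets_eq_imp_space_eq[OF sets_Pi] by simp
  have "(\<lambda>\<omega> k. X (f k) \<omega>) \<in> M \<rightarrow>\<^sub>M PiM UNIV (\<lambda>_. borel)"
    by (rule measurable_PiM_single') (auto simp: X_meas)
  then have shifted_meas: "(\<lambda>\<omega> k. X (f k) \<omega>) \<in> M \<rightarrow>\<^sub>M PiM UNIV (\<lambda>_. D)"
    using measurable_cong_sets[OF refl sets_Pi] by blast
  have "measure (PiM UNIV (\<lambda>_. D)) {s\<in>space (PiM UNIV (\<lambda>_. D)). Q s} =
    measure (distr M (PiM UNIV (\<lambda>_. D)) (\<lambda>\<omega> k. X (f k) \<omega>)) {s\<in>space (PiM UNIV (\<lambda>_. D)). Q s}"
    by (simp only: distr_reindexed_iid[OF indep ident inj])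
  also have "\<dots> = prob ((\<lambda>\<omega> k. X (f k) \<omega>) -` {s\<in>space (PiM UNIV (\<lambda>_. D)). Q s} \<inter> space M)"
    by (rule measure_distr[OF shifted_meas Q_set])
  also have "\<dots> = prob {\<omega>\<in>space M. Q (\<lambda>k. X (f k) \<omega>)}"
    using measurable_space[OF shifted_meas] by (intro arg_cong[where f=prob]) blast
  finally show ?thesis by simp
qed

locale tree_kernel =
  fixes P :: "nat \<Rightarrow> past \<Rightarrow> real" and A :: "nat set" and \<tau> :: "ctx set"
  assumes one_in_alphabet: "1 \<in> A"
    and kernel_range: "\<forall>z\<in>Pasts A. \<forall>a\<in>A. 0 \<le> P a z \<and> P a z \<le> 1"
    and kernel_sum: "\<forall>z\<in>Pasts A. ((\<lambda>a. P a z) has_sum 1) A"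
    and tree: "context_tree A \<tau>"
begin

lemma const_past: "(\<lambda>_. 1) \<in> Pasts A"
  using one_in_alphabet by (simp add: Pasts_def)

lemma alpha_nonneg: "a \<in> A \<Longrightarrow> 0 \<le> alpha P A a"
  unfolding alpha_def using const_past kernel_range by (intro cINF_greatest) auto

lemma alpha_le: "a \<in> A \<Longrightarrow> z \<in> Pasts A \<Longrightarrow> alpha P A a \<le> P a z"
  unfolding alpha_def using kernel_range by (intro cINF_lower) (auto intro!: bdd_belowI[where m=0])

text \<open>The letter Y produced by a uniform value u: u lies in the bracket of a if
  it falls in the a-th of the consecutive intervals of lengths alpha(1), alpha(2), ...\<close>

definition in_bracket :: "nat \<Rightarrow> real \<Rightarrow> bool" where
  "in_bracket a u \<longleftrightarrow> sum (alpha P A) {b\<in>A. b < a} \<le> u \<and> u < sum (alpha P A) {b\<in>A. b \<le> a}"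

definition letter_of :: "real \<Rightarrow> nat option" where
  "letter_of u = (if \<exists>a\<in>A. in_bracket a u then Some (THE a. a \<in> A \<and> in_bracket a u) else None)"

lemma Yv_eq: "Yv P A U i \<omega> = letter_of (U i \<omega>)"
  unfolding Yv_def letter_of_def in_bracket_def by simp

(* The brackets are disjoint because alpha is nonnegative. *)
lemma in_bracket_unique:
  assumes "a \<in> A" "a' \<in> A" "in_bracket a u" "in_bracket a' u" shows "a = a'"
proof (rule ccontr)
  have sums_ordered: "sum (alpha P A) {b\<in>A. b \<le> x} \<le> sum (alpha P A) {b\<in>A. b < y}" if "x < y" for x y
    by (rule sum_mono2) (use that alpha_nonneg in auto)
  assume "a \<noteq> a'"
  then have "a < a' \<or> a' < a" by auto
  then show False using sums_ordered[of a a'] sums_ordered[of a' a] assms(3,4) unfolding in_bracket_def by auto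
qed

lemma letter_of_Some: "letter_of u = Some b \<longleftrightarrow> b \<in> A \<and> in_bracket b u"
proof
  assume h: "letter_of u = Some b"
  then obtain a where a: "a \<in> A" "in_bracket a u" unfolding letter_of_def by (auto split: if_splits)
  have uniq: "\<exists>!a. a \<in> A \<and> in_bracket a u" using a in_bracket_unique by blast
  from h a have "b = (THE a. a \<in> A \<and> in_bracket a u)" unfolding letter_of_def by (auto split: if_splits)
  then show "b \<in> A \<and> in_bracket b u" using theI'[OF uniq] by simp
next
  assume h: "b \<in> A \<and> in_bracket b u"
  have uniq: "\<exists>!a. a \<in> A \<and> in_bracket a u" using h in_bracket_unique by blast
  have "(THE a. a \<in> A \<and> in_bracket a u) = b" using h uniq by (intro the1_equality) auto
  then show "letter_of u = Some b" using h unfolding letter_of_def by auto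
qed

lemma letter_of_None: "letter_of u = None \<longleftrightarrow> \<not> (\<exists>a\<in>A. in_bracket a u)"
  unfolding letter_of_def by auto

lemma letter_of_measurable: "letter_of \<in> borel \<rightarrow>\<^sub>M count_space UNIV"
proof (subst measurable_count_space_eq2_countable, safe)
  fix y :: "nat option"
  show "letter_of -` {y} \<inter> space borel \<in> sets borel"
  proof (cases y)
    case None
    have "letter_of -` {y} \<inter> space borel = {u. \<forall>a\<in>A. \<not> in_bracket a u}" using None letter_of_None by auto
    also have "\<dots> \<in> sets borel" unfolding in_bracket_def by measurable
    finally show ?thesis .
  next
    case (Some b)
    have "letter_of -` {y} \<inter> space borel = {u. b \<in> A \<and> in_bracket b u}" using Some letter_of_Some by auto
    also have "\<dots> \<in> sets borel" unfolding in_bracket_def by measurable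
    finally show ?thesis .
  qed
qed auto

lemma c_tau_in_tree:
  assumes "x \<in> Pasts A" shows "c_tau \<tau> x \<in> \<tau> \<and> ctx_suffix (c_tau \<tau> x) (Infc x)"
proof -
  have "\<exists>!c. c \<in> \<tau> \<and> ctx_suffix c (Infc x)" using tree assms unfolding context_tree_def by blast
  then show ?thesis unfolding c_tau_def by (rule theI')
qed

lemma c_tau_unique:
  assumes "x \<in> Pasts A" "c \<in> \<tau>" "ctx_suffix c (Infc x)" shows "c_tau \<tau> x = c"
proof -
  have "\<exists>!c. c \<in> \<tau> \<and> ctx_suffix c (Infc x)" using tree assms unfolding context_tree_def by blast
  then show ?thesis unfolding c_tau_def using assms by (intro the1_equality) auto
qed

lemma c_tau_local:
  assumes "x \<in> Pasts A" "x' \<in> Pasts A" "ctx_len (c_tau \<tau> x) \<le> enat n" "\<forall>j<n. x j = x' j"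
  shows "c_tau \<tau> x' = c_tau \<tau> x"
proof -
  obtain v where v: "c_tau \<tau> x = Fin v" using assms(3) by (cases "c_tau \<tau> x") auto
  have "Fin v \<in> \<tau>" "\<forall>j<length v. x j = v ! j" using c_tau_in_tree[OF assms(1)] v by auto
  moreover have "length v \<le> n" using assms(3) v by simp
  ultimately have "ctx_suffix (Fin v) (Infc x')" using assms(4) by auto
  then show ?thesis using c_tau_unique[OF assms(2) \<open>Fin v \<in> \<tau>\<close>] v by simp
qed

text \<open>The quantity c^n_tau as a function of the sequence s k = U_{n-k}: the longest context
  among all pasts whose letters agree with Y where Y is defined.\<close>

definition filled_past :: "(nat \<Rightarrow> real) \<Rightarrow> (nat \<Rightarrow> nat) \<Rightarrow> past" where
  "filled_past s a = (\<lambda>j. case letter_of (s j) of Some b \<Rightarrow> b | None \<Rightarrow> a j)"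

definition max_ctx_len :: "(nat \<Rightarrow> real) \<Rightarrow> enat" where
  "max_ctx_len s = (SUP a\<in>{a. \<forall>j. a j \<in> A}. ctx_len (c_tau \<tau> (filled_past s a)))"

lemma filled_past_in_Pasts: "\<forall>j. a j \<in> A \<Longrightarrow> filled_past s a \<in> Pasts A"
  unfolding Pasts_def filled_past_def by (auto split: option.split simp: letter_of_Some)

lemma cn_eq_max_ctx_len: "cn P A \<tau> U n \<omega> = max_ctx_len (\<lambda>k. U (n - int k) \<omega>)"
proof -
  let ?g = "\<lambda>(a::int \<Rightarrow> nat) k. a (n - int k)"
  have reindex: "?g ` {a. \<forall>i. a i \<in> A} = {a. \<forall>j. a j \<in> A}"
  proof (safe)
    fix a' :: "nat \<Rightarrow> nat" assume "\<forall>j. a' j \<in> A"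
    let ?a = "\<lambda>i. a' (nat (n - i))"
    have "a' = ?g ?a" by auto
    moreover have "?a \<in> {a. \<forall>i. a i \<in> A}" using \<open>\<forall>j. a' j \<in> A\<close> by auto
    ultimately show "a' \<in> ?g ` {a. \<forall>i. a i \<in> A}" by (rule image_eqI)
  qed auto
  have "(\<lambda>j. Yfill P A U (n - int j) a \<omega>) = filled_past (\<lambda>k. U (n - int k) \<omega>) (?g a)" for a
    by (auto simp: Yfill_def filled_past_def Yv_eq)
  then have "cn P A \<tau> U n \<omega> =
      (SUP a\<in>{a. \<forall>i. a i \<in> A}. ctx_len (c_tau \<tau> (filled_past (\<lambda>k. U (n - int k) \<omega>) (?g a))))"
    unfolding cn_def by simp
  also have "\<dots> = max_ctx_len (\<lambda>k. U (n - int k) \<omega>)"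
    unfolding max_ctx_len_def reindex[symmetric] by (simp add: image_image)
  finally show ?thesis .
qed

definition compatible :: "nat \<Rightarrow> nat list \<Rightarrow> (nat \<Rightarrow> real) \<Rightarrow> bool" where
  "compatible n w s \<longleftrightarrow> (\<forall>j<n. letter_of (s j) = None \<or> letter_of (s j) = Some (w ! j))"

definition long_ctx_words :: "nat \<Rightarrow> nat list set" where
  "long_ctx_words n = {w. length w = n \<and> set w \<subseteq> A \<and> \<not> ctx_len (c_tau \<tau> (cat w (\<lambda>_. 1))) \<le> enat n}"

definition ctx_bounded :: "nat \<Rightarrow> (nat \<Rightarrow> real) \<Rightarrow> bool" where
  "ctx_bounded n s \<longleftrightarrow> (\<forall>w\<in>long_ctx_words n. \<not> compatible n w s)"

lemma cat_const_in_Pasts: "set w \<subseteq> A \<Longrightarrow> cat w (\<lambda>_. 1) \<in> Pasts A"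
  unfolding Pasts_def cat_def using one_in_alphabet by auto

lemma max_ctx_len_le_iff: "max_ctx_len s \<le> enat n \<longleftrightarrow> ctx_bounded n s"
proof
  assume bound: "max_ctx_len s \<le> enat n"
  show "ctx_bounded n s" unfolding ctx_bounded_def
  proof (intro ballI notI)
    fix w assume w: "w \<in> long_ctx_words n" and comp: "compatible n w s"
    define a where "a = (\<lambda>j. if j < n then w ! j else 1)"
    have aA: "\<forall>j. a j \<in> A" using w one_in_alphabet unfolding a_def long_ctx_words_def by (auto simp: subset_iff)
    let ?x = "filled_past s a"
    have "ctx_len (c_tau \<tau> ?x) \<le> max_ctx_len s" unfolding max_ctx_len_def using aA by (intro SUP_upper) auto
    with bound have le: "ctx_len (c_tau \<tau> ?x) \<le> enat n" by simp
    have agree: "\<forall>j<n. ?x j = cat w (\<lambda>_. 1) j"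
      using comp w unfolding compatible_def filled_past_def cat_def a_def long_ctx_words_def
      by (auto split: option.split)
    have "c_tau \<tau> (cat w (\<lambda>_. 1)) = c_tau \<tau> ?x"
      by (rule c_tau_local[OF filled_past_in_Pasts[OF aA] cat_const_in_Pasts le agree])
        (use w in \<open>auto simp: long_ctx_words_def\<close>)
    with le w show False unfolding long_ctx_words_def by simp
  qed
next
  assume bounded: "ctx_bounded n s"
  show "max_ctx_len s \<le> enat n" unfolding max_ctx_len_def
  proof (rule SUP_least)
    fix a :: "nat \<Rightarrow> nat" assume "a \<in> {a. \<forall>j. a j \<in> A}"
    then have x_past: "filled_past s a \<in> Pasts A" by (simp add: filled_past_in_Pasts)
    define w where "w = map (filled_past s a) [0..<n]"
    have wA: "set w \<subseteq> A" using x_past unfolding w_def Pasts_def by auto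
    have "compatible n w s" unfolding compatible_def w_def filled_past_def by (auto split: option.split)
    with bounded have "w \<notin> long_ctx_words n" unfolding ctx_bounded_def by auto
    then have le: "ctx_len (c_tau \<tau> (cat w (\<lambda>_. 1))) \<le> enat n"
      using wA unfolding long_ctx_words_def w_def by auto
    have "\<forall>j<n. cat w (\<lambda>_. 1) j = filled_past s a j" unfolding cat_def w_def by auto
    then have "c_tau \<tau> (filled_past s a) = c_tau \<tau> (cat w (\<lambda>_. 1))"
      by (rule c_tau_local[OF cat_const_in_Pasts[OF wA] x_past le])
    with le show "ctx_len (c_tau \<tau> (filled_past s a)) \<le> enat n" by simp
  qed
qed

lemma ctx_bounded_cong: "\<forall>k<n. s k = s' k \<Longrightarrow> ctx_bounded n s = ctx_bounded n s'"
  unfolding ctx_bounded_def compatible_def by auto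

lemma ctx_bounded_measurable:
  assumes g: "\<And>k. (\<lambda>x. g x k) \<in> borel_measurable N"
  shows "Measurable.pred N (\<lambda>x. ctx_bounded n (g x))"
proof -
  have [measurable]: "(\<lambda>x. letter_of (g x k)) \<in> N \<rightarrow>\<^sub>M count_space UNIV" for k
    using measurable_compose[OF g letter_of_measurable] .
  have "countable (long_ctx_words n)" by (rule countable_subset[of _ UNIV]) auto
  then show ?thesis unfolding ctx_bounded_def compatible_def
    by (intro pred_intros_countable_bounded) measurable
qed

lemma max_ctx_len_measurable:
  assumes g: "\<And>k. (\<lambda>x. g x k) \<in> borel_measurable N"
  shows "(\<lambda>x. max_ctx_len (g x)) \<in> N \<rightarrow>\<^sub>M count_space UNIV"
proof (subst measurable_count_space_eq2_countable, safe)
  fix e :: enat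
  note [measurable] = ctx_bounded_measurable[OF g]
  have level_set: "(\<lambda>x. max_ctx_len (g x)) -` {e} \<inter> space N =
    {x \<in> space N. (\<forall>n. e = enat n \<longrightarrow> ctx_bounded n (g x) \<and> (n = 0 \<or> \<not> ctx_bounded (n - 1) (g x)))
                  \<and> (e = \<infinity> \<longrightarrow> (\<forall>n. \<not> ctx_bounded n (g x)))}"
  proof -
    have "max_ctx_len (g x) = e \<longleftrightarrow>
      (\<forall>n. e = enat n \<longrightarrow> max_ctx_len (g x) \<le> enat n \<and> (n = 0 \<or> \<not> max_ctx_len (g x) \<le> enat (n - 1)))
      \<and> (e = \<infinity> \<longrightarrow> (\<forall>n. \<not> max_ctx_len (g x) \<le> enat n))" for x
      by (cases "max_ctx_len (g x)"; cases e) auto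
    then show ?thesis by (auto simp: max_ctx_len_le_iff)
  qed
  show "(\<lambda>x. max_ctx_len (g x)) -` {e} \<inter> space N \<in> sets N"
    unfolding level_set by measurable
qed auto

definition late_coalescence :: "nat \<Rightarrow> (int \<Rightarrow> real) \<Rightarrow> bool" where
  "late_coalescence m r \<longleftrightarrow> (\<forall>i. - int m < i \<and> i \<le> 0 \<longrightarrow>
     \<not> (\<forall>j\<in>{i..0}. letter_of (r j) \<noteq> None \<or> ctx_bounded (nat (j - i)) (\<lambda>k. r (j - int k))))"

lemma theta_bar_le_iff:
  "theta_bar P A \<tau> U 0 \<omega> \<le> ereal (- real m) \<longleftrightarrow> late_coalescence m (\<lambda>j. U j \<omega>)"
proof -
  have "theta_bar P A \<tau> U 0 \<omega> \<le> ereal (- real m) \<longleftrightarrow>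
    (\<forall>i. i \<le> 0 \<and> (\<forall>j\<in>{i..0}. Yv P A U j \<omega> \<noteq> None \<or> cn P A \<tau> U j \<omega> \<le> enat (nat (j - i))) \<longrightarrow> i \<le> - int m)"
    unfolding theta_bar_def Sup_le_iff by auto
  also have "\<dots> \<longleftrightarrow> late_coalescence m (\<lambda>j. U j \<omega>)"
    unfolding late_coalescence_def Yv_eq cn_eq_max_ctx_len max_ctx_len_le_iff
    by (auto simp del: not_None_eq simp: not_le)
  finally show ?thesis .
qed

lemma theta_bar_nonpos: "theta_bar P A \<tau> U 0 \<omega> \<le> 0"
  unfolding theta_bar_def by (auto intro!: Sup_least)

lemma late_coalescence_restrict:
  "late_coalescence m (restrict r {- int m + 1..0}) = late_coalescence m r"
proof -
  have "ctx_bounded (nat (j - i)) (\<lambda>k. restrict r {- int m + 1..0} (j - int k))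
      = ctx_bounded (nat (j - i)) (\<lambda>k. r (j - int k))"
    if "- int m < i" "j \<in> {i..0}" for i j
    by (rule ctx_bounded_cong) (use that in auto)
  then show ?thesis unfolding late_coalescence_def by auto
qed

lemma late_coalescence_measurable:
  assumes g: "\<And>k. (\<lambda>x. g x k) \<in> borel_measurable N"
  shows "Measurable.pred N (\<lambda>x. late_coalescence m (g x))"
proof -
  have [measurable]: "(\<lambda>x. letter_of (g x k)) \<in> N \<rightarrow>\<^sub>M count_space UNIV" for k
    using measurable_compose[OF g letter_of_measurable] .
  have [measurable]: "Measurable.pred N (\<lambda>x. ctx_bounded n (\<lambda>k. g x (j - int k)))" for n j
    by (rule ctx_bounded_measurable) (rule g)
  show ?thesis unfolding late_coalescence_def by measurable
qed

definition zeta_of :: "enat \<Rightarrow> real \<Rightarrow> enat" where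
  "zeta_of e u = (if u < alpha_m1 P A then 0
      else if \<exists>k::nat. alpha_ki P A \<tau> e (int k - 1) \<le> u \<and> u < alpha_ki P A \<tau> e (int k)
      then enat (LEAST k::nat. alpha_ki P A \<tau> e (int k - 1) \<le> u \<and> u < alpha_ki P A \<tau> e (int k))
      else \<infinity>)"

lemma zeta_eq: "zeta P A \<tau> U l \<omega> = zeta_of (cn P A \<tau> U (l - 1) \<omega>) (U l \<omega>)"
  unfolding zeta_def zeta_of_def ..

lemma zeta_of_le_iff: "zeta_of e u \<le> enat i \<longleftrightarrow> u < alpha_m1 P A \<or>
   (\<exists>k\<le>i. alpha_ki P A \<tau> e (int k - 1) \<le> u \<and> u < alpha_ki P A \<tau> e (int k))"
proof -
  let ?window = "\<lambda>k::nat. alpha_ki P A \<tau> e (int k - 1) \<le> u \<and> u < alpha_ki P A \<tau> e (int k)"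
  show ?thesis
  proof (cases "\<not> u < alpha_m1 P A \<and> (\<exists>k. ?window k)")
    case True
    then have "?window (LEAST k. ?window k)" using LeastI_ex[of ?window] by blast
    then have "(LEAST k. ?window k) \<le> i \<longleftrightarrow> (\<exists>k\<le>i. ?window k)"
      by (auto intro: Least_le order.trans)
    then show ?thesis using True by (simp add: zeta_of_def)
  qed (auto simp: zeta_of_def)
qed

(* zeta_l > i forces U_l above the threshold alpha_i^{c^{l-1}}: below it, the first k
   with U_l < alpha_k^{c^{l-1}} is at most i. *)
lemma zeta_of_gt:
  assumes "\<not> zeta_of e u \<le> enat i" shows "alpha_ki P A \<tau> e (int i) \<le> u"
proof (rule ccontr)
  assume "\<not> alpha_ki P A \<tau> e (int i) \<le> u"
  then have below_i: "u < alpha_ki P A \<tau> e (int i)" by simp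
  have above_m1: "\<not> u < alpha_m1 P A" using assms zeta_of_le_iff by auto
  let ?below = "\<lambda>k::nat. u < alpha_ki P A \<tau> e (int k)"
  define k0 where "k0 = (LEAST k. ?below k)"
  have k0: "?below k0" "k0 \<le> i" unfolding k0_def using below_i by (auto intro: LeastI Least_le)
  have "alpha_ki P A \<tau> e (int k0 - 1) \<le> u"
  proof (cases k0)
    case 0 then show ?thesis using above_m1 by (simp add: alpha_ki_def)
  next
    case (Suc k1)
    have "\<not> ?below k1" unfolding k0_def using Suc by (intro not_less_Least) (simp add: k0_def)
    then show ?thesis using Suc by simp
  qed
  then have "zeta_of e u \<le> enat i" unfolding zeta_of_le_iff using k0 by blast
  with assms show False by simp
qed

lemma zeta_of_le_measurable:
  assumes "g \<in> borel_measurable N" and h: "h \<in> N \<rightarrow>\<^sub>M count_space UNIV"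
  shows "Measurable.pred N (\<lambda>x. zeta_of (h x) (g x) \<le> enat i)"
proof -
  have "Measurable.pred N (\<lambda>x. zeta_of e (g x) \<le> enat i)" for e
    unfolding zeta_of_le_iff using assms(1) by measurable
  then show ?thesis by (rule measurable_compose_countable[OF _ h])
qed

lemma L0_le_iff: "Lk P A \<tau> U 0 \<omega> \<le> enat i \<longleftrightarrow>
   (\<forall>m::nat. theta_bar P A \<tau> U 0 \<omega> \<le> ereal (- real m) \<longrightarrow> zeta P A \<tau> U (- int m) \<omega> \<le> enat i)"
proof -
  have "block P A \<tau> U 0 \<omega> = {l. theta_bar P A \<tau> U 0 \<omega> \<le> ereal (real_of_int l) \<and> l \<le> 0}"
    unfolding block_def by (simp add: one_ereal_def)
  then have "Lk P A \<tau> U 0 \<omega> \<le> enat i \<longleftrightarrow>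
      (\<forall>l\<le>0. theta_bar P A \<tau> U 0 \<omega> \<le> ereal (real_of_int l) \<longrightarrow> zeta P A \<tau> U l \<omega> \<le> enat i)"
    unfolding Lk_def SUP_le_iff by auto
  also have "\<dots> \<longleftrightarrow> (\<forall>m::nat. theta_bar P A \<tau> U 0 \<omega> \<le> ereal (- real m) \<longrightarrow> zeta P A \<tau> U (- int m) \<omega> \<le> enat i)"
  proof safe
    fix m :: nat
    assume "\<forall>l\<le>0. theta_bar P A \<tau> U 0 \<omega> \<le> ereal (real_of_int l) \<longrightarrow> zeta P A \<tau> U l \<omega> \<le> enat i"
      "theta_bar P A \<tau> U 0 \<omega> \<le> ereal (- real m)"
    then show "zeta P A \<tau> U (- int m) \<omega> \<le> enat i" by (erule_tac allE[where x="- int m"]) simp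
  next
    fix l :: int
    assume "\<forall>m::nat. theta_bar P A \<tau> U 0 \<omega> \<le> ereal (- real m) \<longrightarrow> zeta P A \<tau> U (- int m) \<omega> \<le> enat i"
      "l \<le> 0" "theta_bar P A \<tau> U 0 \<omega> \<le> ereal (real_of_int l)"
    then show "zeta P A \<tau> U l \<omega> \<le> enat i" by (erule_tac allE[where x="nat (- l)"]) simp
  qed
  finally show ?thesis .
qed

lemma alpha_summable: "alpha P A summable_on A"
proof (rule summable_on_comparison_test)
  show "(\<lambda>a. P a (\<lambda>_. 1)) summable_on A" using kernel_sum const_past unfolding summable_on_def by blast
qed (use alpha_le const_past alpha_nonneg in auto)

lemma alpha_m1_nonneg: "0 \<le> alpha_m1 P A"
  unfolding alpha_m1_def by (rule infsum_nonneg) (rule alpha_nonneg)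

lemma alpha_m1_le_1: "alpha_m1 P A \<le> 1"
proof -
  have "alpha_m1 P A \<le> infsum (\<lambda>a. P a (\<lambda>_. 1)) A" unfolding alpha_m1_def
    by (rule infsum_mono[OF alpha_summable])
      (use kernel_sum const_past alpha_le in \<open>auto simp: summable_on_def\<close>)
  also have "\<dots> = 1" using kernel_sum const_past by (auto intro: infsumI)
  finally show ?thesis .
qed

(* Every u in [0, alpha_{-1}) lies in some bracket, i.e. produces a letter:
   a finite partial sum already exceeds u, and the least a whose partial sum does is the letter. *)
lemma letter_below_alpha_m1:
  assumes u_nonneg: "0 \<le> u" and u_below: "u < alpha_m1 P A" shows "\<exists>a\<in>A. in_bracket a u"
proof -
  let ?S = "\<lambda>a. sum (alpha P A) {b\<in>A. b \<le> a}"
  have alpha_m1_SUP: "alpha_m1 P A = (SUP F\<in>{F. finite F \<and> F \<subseteq> A}. sum (alpha P A) F)"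
    unfolding alpha_m1_def by (rule infsum_nonneg_is_SUPREMUM_real[OF alpha_summable alpha_nonneg])
  have "\<exists>F. finite F \<and> F \<subseteq> A \<and> u < sum (alpha P A) F"
  proof (rule ccontr)
    assume "\<not> ?thesis"
    then have "(SUP F\<in>{F. finite F \<and> F \<subseteq> A}. sum (alpha P A) F) \<le> u"
      by (intro cSUP_least) (auto simp: not_less)
    with alpha_m1_SUP u_below show False by simp
  qed
  then obtain F where F: "finite F" "F \<subseteq> A" "u < sum (alpha P A) F" by blast
  have "F \<noteq> {}" using F u_nonneg by auto
  then have "Max F \<in> A" using F Max_in by blast
  have "sum (alpha P A) F \<le> ?S (Max F)"
    by (rule sum_mono2) (use F \<open>F \<noteq> {}\<close> alpha_nonneg in auto)
  with \<open>Max F \<in> A\<close> have exists: "Max F \<in> A \<and> u < ?S (Max F)" using F by simp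
  define a0 where "a0 = (LEAST a. a \<in> A \<and> u < ?S a)"
  have a0: "a0 \<in> A \<and> u < ?S a0" unfolding a0_def using exists by (rule LeastI)
  have "sum (alpha P A) {b\<in>A. b < a0} \<le> u"
  proof (cases "{b\<in>A. b < a0} = {}")
    case True then show ?thesis using u_nonneg by (simp only: True sum.empty)
  next
    case False
    define b' where "b' = Max {b\<in>A. b < a0}"
    have fin: "finite {b\<in>A. b < a0}" by simp
    have b': "b' \<in> A" "b' < a0" using Max_in[OF fin False] unfolding b'_def by auto
    have "{b\<in>A. b < a0} = {b\<in>A. b \<le> b'}"
      using Max_ge[OF fin] b' unfolding b'_def by fastforce
    moreover have "\<not> (b' \<in> A \<and> u < ?S b')"
      unfolding a0_def using b' by (intro not_less_Least) (simp add: a0_def)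
    ultimately show ?thesis using b' by simp
  qed
  then show ?thesis using a0 unfolding in_bracket_def by blast
qed

(* If Y_0 is a letter, theta_bar[0] = 0, so the first block is {0} and L_0 = zeta_0 = 0. *)
lemma L0_zero_if_letter:
  assumes "letter_of (U 0 \<omega>) \<noteq> None" "U 0 \<omega> < alpha_m1 P A"
  shows "Lk P A \<tau> U 0 \<omega> \<le> enat i"
  unfolding L0_le_iff
proof (intro allI impI)
  fix m :: nat assume "theta_bar P A \<tau> U 0 \<omega> \<le> ereal (- real m)"
  then have "late_coalescence m (\<lambda>j. U j \<omega>)" unfolding theta_bar_le_iff .
  have "m = 0"
  proof (rule ccontr)
    assume "m \<noteq> 0"
    then have "\<not> (\<forall>j\<in>{0..0}. letter_of (U j \<omega>) \<noteq> None \<or> ctx_bounded (nat (j - 0)) (\<lambda>k. U (j - int k) \<omega>))"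
      using \<open>late_coalescence m (\<lambda>j. U j \<omega>)\<close> unfolding late_coalescence_def
      by (elim allE[where x=0]) simp
    with assms(1) show False by simp
  qed
  then show "zeta P A \<tau> U (- int m) \<omega> \<le> enat i" using assms(2) by (simp add: zeta_eq zeta_of_def)
qed

end

locale uniform_coupling = tree_kernel P A \<tau> + prob_space M
  for P A \<tau> and M :: "'w measure" +
  fixes U :: "int \<Rightarrow> 'w \<Rightarrow> real"
  assumes indep: "indep_vars (\<lambda>_. borel) U UNIV"
    and uniform: "\<forall>j. distr M borel (U j) = uniform_measure lborel {0..<1::real}"
begin

lemma U_measurable[measurable]: "U j \<in> borel_measurable M"
  using indep unfolding indep_vars_def by auto

lemma cn_measurable[measurable]: "(\<lambda>\<omega>. cn P A \<tau> U n \<omega>) \<in> M \<rightarrow>\<^sub>M count_space UNIV"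
  unfolding cn_eq_max_ctx_len by (rule max_ctx_len_measurable) simp

lemma late_coalescence_event[measurable]: "Measurable.pred M (\<lambda>\<omega>. late_coalescence m (\<lambda>j. U j \<omega>))"
  by (rule late_coalescence_measurable) simp

lemma zeta_le_event[measurable]: "Measurable.pred M (\<lambda>\<omega>. zeta P A \<tau> U l \<omega> \<le> enat i)"
  unfolding zeta_eq by (rule zeta_of_le_measurable) measurable

lemma L0_le_event[measurable]: "Measurable.pred M (\<lambda>\<omega>. Lk P A \<tau> U 0 \<omega> \<le> enat i)"
  unfolding L0_le_iff theta_bar_le_iff by measurable

lemma prob_uniform_below:
  assumes "0 \<le> c" "c \<le> 1"
  shows "prob {\<omega>\<in>space M. 0 \<le> U j \<omega> \<and> U j \<omega> < c} = c"
proof -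
  have "prob {\<omega>\<in>space M. 0 \<le> U j \<omega> \<and> U j \<omega> < c} = measure (distr M borel (U j)) {0..<c}"
    by (subst measure_distr) (auto intro!: arg_cong[where f=prob])
  also have "\<dots> = measure (uniform_measure lborel {0..<1::real}) {0..<c}" using uniform by simp
  also have "\<dots> = c"
    using assms unfolding measure_def by (simp add: Int_absorb2 divide_ennreal_def)
  finally show ?thesis .
qed

(* Second bound: with probability alpha_{-1}, U_0 produces a letter and L_0 = 0. *)
lemma prob_L0_le_ge_alpha_m1: "alpha_m1 P A \<le> prob {\<omega>\<in>space M. Lk P A \<tau> U 0 \<omega> \<le> enat i}"
proof -
  have "{\<omega>\<in>space M. 0 \<le> U 0 \<omega> \<and> U 0 \<omega> < alpha_m1 P A} \<subseteq> {\<omega>\<in>space M. Lk P A \<tau> U 0 \<omega> \<le> enat i}"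
  proof safe
    fix \<omega> assume "0 \<le> U 0 \<omega>" "U 0 \<omega> < alpha_m1 P A"
    moreover from this have "letter_of (U 0 \<omega>) \<noteq> None"
      unfolding letter_of_None by (intro notI) (use letter_below_alpha_m1 in blast)
    ultimately show "Lk P A \<tau> U 0 \<omega> \<le> enat i" by (intro L0_zero_if_letter)
  qed
  then have "prob {\<omega>\<in>space M. 0 \<le> U 0 \<omega> \<and> U 0 \<omega> < alpha_m1 P A} \<le> prob {\<omega>\<in>space M. Lk P A \<tau> U 0 \<omega> \<le> enat i}"
    by (rule finite_measure_mono) measurable
  then show ?thesis using prob_uniform_below alpha_m1_nonneg alpha_m1_le_1 by simp
qed

text \<open>The site -m exceeds level i if U_{-m} >= alpha_i^{c^{-m-1}}; as a property of the
  sequence s k = U_{-m-k} this does not depend on m.\<close>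

definition exceeds :: "nat \<Rightarrow> (nat \<Rightarrow> real) \<Rightarrow> bool" where
  "exceeds i s \<longleftrightarrow> alpha_ki P A \<tau> (max_ctx_len (\<lambda>k. s (Suc k))) (int i) \<le> s 0"

abbreviation late_event :: "nat \<Rightarrow> 'w set" where
  "late_event m \<equiv> {\<omega>\<in>space M. late_coalescence m (\<lambda>j. U j \<omega>)}"

abbreviation exceed_event :: "nat \<Rightarrow> nat \<Rightarrow> 'w set" where
  "exceed_event i m \<equiv> {\<omega>\<in>space M. exceeds i (\<lambda>k. U (- int m - int k) \<omega>)}"

lemma exceeds_measurable:
  assumes g: "\<And>k. (\<lambda>x. g x k) \<in> borel_measurable N"
  shows "Measurable.pred N (\<lambda>x. exceeds i (g x))"
proof -
  have ctx_meas: "(\<lambda>x. max_ctx_len (\<lambda>k. g x (Suc k))) \<in> N \<rightarrow>\<^sub>M count_space UNIV"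
    by (rule max_ctx_len_measurable) (rule g)
  have "Measurable.pred N (\<lambda>x. alpha_ki P A \<tau> e (int i) \<le> g x 0)" for e
    using g by measurable
  then show ?thesis unfolding exceeds_def by (rule measurable_compose_countable[OF _ ctx_meas])
qed

lemma exceed_event_sets[measurable]: "exceed_event i m \<in> sets M"
  by (rule exceeds_measurable[THEN predE]) simp

lemma exceed_event_0:
  "exceed_event i 0 = {\<omega>\<in>space M. alpha_ki P A \<tau> (cn P A \<tau> U (-1) \<omega>) (int i) \<le> U 0 \<omega>}"
  unfolding exceeds_def cn_eq_max_ctx_len by (simp add: algebra_simps)

(* By stationarity, every site is as likely to exceed level i as site 0. *)
lemma prob_exceed_event: "prob (exceed_event i m) = prob (exceed_event i 0)"
proof -
  have law: "prob (exceed_event i m') =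
      measure (PiM UNIV (\<lambda>_. uniform_measure lborel {0..<1::real})) {s \<in> space (PiM UNIV (\<lambda>_. uniform_measure lborel {0..<1::real})). exceeds i s}"
    for m'
    by (rule prob_reindexed_iid[OF indep]) (use uniform in \<open>auto simp: inj_on_def intro: exceeds_measurable\<close>)
  show ?thesis unfolding law ..
qed

(* Site -m lies in the first block and exceeds level i only through independent events:
   the first depends on U_{-m+1..0}, the second on U_{..-m}. *)
lemma late_exceed_indep:
  "prob (late_event m \<inter> exceed_event i m) = prob (late_event m) * prob (exceed_event i m)"
proof (rule indep_events_disjoint_coordinates[OF indep, where I="{- int m + 1..0}" and J="{..- int m}"])
  show "Measurable.pred (PiM {- int m + 1..0} (\<lambda>_. borel)) (late_coalescence m)"
    by (rule late_coalescence_measurable) (rule component_measurable)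
  show "Measurable.pred (PiM {..- int m} (\<lambda>_. borel)) (\<lambda>r. exceeds i (\<lambda>k. r (- int m - int k)))"
    by (rule exceeds_measurable) (rule component_measurable)
  show "late_coalescence m (restrict r {- int m + 1..0}) = late_coalescence m r" for r
    by (rule late_coalescence_restrict)
  show "(\<lambda>r. exceeds i (\<lambda>k. r (- int m - int k))) (restrict r {..- int m}) =
      exceeds i (\<lambda>k. r (- int m - int k))" for r
    by simp
qed auto

lemma zeta_gt_exceeds:
  assumes "\<not> zeta P A \<tau> U (- int m) \<omega> \<le> enat i" shows "exceeds i (\<lambda>k. U (- int m - int k) \<omega>)"
proof -
  have "alpha_ki P A \<tau> (cn P A \<tau> U (- int m - 1) \<omega>) (int i) \<le> U (- int m) \<omega>"
    using assms unfolding zeta_eq by (rule zeta_of_gt)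
  then show ?thesis unfolding exceeds_def cn_eq_max_ctx_len by (simp add: algebra_simps)
qed

(* Tail-sum bound  sum_m P(theta_bar[0] <= -m) <= 1 + E|theta_bar[0]|: for m >= 1 the
   indicators of theta_bar[0] <= -m sum pointwise to at most |theta_bar[0]|. *)
lemma sum_prob_late_le: "(\<Sum>m. emeasure M (late_event m)) \<le> 1 + E_abs_theta0 M P A \<tau> U"
proof -
  let ?f = "\<lambda>m. emeasure M (late_event m)"
  have split_first: "(\<Sum>m. ?f m) = (\<Sum>m. ?f (Suc m)) + ?f 0"
    by (rule sums_unique[symmetric], rule sums_Suc) (rule summable_sums, simp)
  have "(\<Sum>m. ?f (Suc m)) = (\<Sum>m. \<integral>\<^sup>+ \<omega>. indicator (late_event (Suc m)) \<omega> \<partial>M)"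
    by simp
  also have "\<dots> = (\<integral>\<^sup>+ \<omega>. (\<Sum>m. indicator (late_event (Suc m)) \<omega>) \<partial>M)"
    by (rule nn_integral_suminf[symmetric]) simp
  also have "\<dots> \<le> E_abs_theta0 M P A \<tau> U" unfolding E_abs_theta0_def
  proof (rule nn_integral_mono)
    fix \<omega> assume "\<omega> \<in> space M"
    then have "(\<Sum>m. indicator (late_event (Suc m)) \<omega> :: ennreal) =
      (\<Sum>m. if theta_bar P A \<tau> U 0 \<omega> \<le> ereal (- real (Suc m)) then 1 else 0)"
      by (simp add: theta_bar_le_iff indicator_def of_bool_def del: of_nat_Suc)
    also have "\<dots> \<le> e2ennreal \<bar>theta_bar P A \<tau> U 0 \<omega>\<bar>"
      by (rule count_below_le_abs) (rule theta_bar_nonpos)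
    finally show "(\<Sum>m. indicator (late_event (Suc m)) \<omega> :: ennreal) \<le> e2ennreal \<bar>theta_bar P A \<tau> U 0 \<omega>\<bar>" .
  qed
  finally show ?thesis unfolding split_first
    by (simp add: add.commute add_mono emeasure_le_1)
qed

(* First bound: union bound over the sites -m of the first block, independence of the
   two events at each site, stationarity, and the tail-sum estimate. *)
lemma prob_L0_gt_le:
  assumes finite_mean: "E_abs_theta0 M P A \<tau> U < \<infinity>"
  shows "prob {\<omega>\<in>space M. enat i < Lk P A \<tau> U 0 \<omega>}
    \<le> (enn2real (E_abs_theta0 M P A \<tau> U) + 1) * prob (exceed_event i 0)"
proof -
  define p where "p = prob (exceed_event i 0)"
  define E where "E = E_abs_theta0 M P A \<tau> U"
  have "{\<omega>\<in>space M. enat i < Lk P A \<tau> U 0 \<omega>} \<subseteq> (\<Union>m. late_event m \<inter> exceed_event i m)"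
    using zeta_gt_exceeds by (auto simp: not_le[symmetric] L0_le_iff theta_bar_le_iff)
  then have "emeasure M {\<omega>\<in>space M. enat i < Lk P A \<tau> U 0 \<omega>} \<le> emeasure M (\<Union>m. late_event m \<inter> exceed_event i m)"
    by (rule emeasure_mono) measurable
  also have "\<dots> \<le> (\<Sum>m. emeasure M (late_event m \<inter> exceed_event i m))"
    by (rule emeasure_subadditive_countably) auto
  also have "\<dots> = (\<Sum>m. emeasure M (late_event m) * ennreal p)"
    using late_exceed_indep prob_exceed_event
    by (simp add: emeasure_eq_measure ennreal_mult p_def)
  also have "\<dots> = (\<Sum>m. emeasure M (late_event m)) * ennreal p" by simp
  also have "\<dots> \<le> (1 + E) * ennreal p" unfolding E_def by (rule mult_right_mono[OF sum_prob_late_le]) simp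
  also have "\<dots> = ennreal ((enn2real E + 1) * p)"
    using finite_mean unfolding E_def p_def
    by (cases "E_abs_theta0 M P A \<tau> U") (auto simp: ennreal_mult ennreal_plus add.commute)
  finally show ?thesis unfolding E_def p_def
    by (simp add: emeasure_eq_measure ennreal_le_iff)
qed

lemma prob_L0_le_compl:
  "prob {\<omega>\<in>space M. Lk P A \<tau> U 0 \<omega> \<le> enat i} = 1 - prob {\<omega>\<in>space M. enat i < Lk P A \<tau> U 0 \<omega>}"
proof -
  have "{\<omega>\<in>space M. enat i < Lk P A \<tau> U 0 \<omega>} = space M - {\<omega>\<in>space M. Lk P A \<tau> U 0 \<omega> \<le> enat i}"
    by (auto simp: not_le)
  then show ?thesis by (simp add: prob_compl)
qed

end

theorem mainTheorem12:
  fixes A :: "nat set" and P :: "nat \<Rightarrow> past \<Rightarrow> real" and \<tau> :: "ctx set"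
    and M :: "'w measure" and U :: "int \<Rightarrow> 'w \<Rightarrow> real" and i :: nat
  assumes alphabet: "A = {1..} \<or> (\<exists>n\<ge>1. A = {1..n})"
    and kernel_range: "\<forall>z\<in>Pasts A. \<forall>a\<in>A. 0 \<le> P a z \<and> P a z \<le> 1"
    and kernel_sum: "\<forall>z\<in>Pasts A. ((\<lambda>a. P a z) has_sum 1) A"
    and skel: "skeleton A \<tau>"
    and lc: "LC P A \<tau>"
    and ps: "prob_space M"
    and indep: "prob_space.indep_vars M (\<lambda>_. borel) U UNIV"
    and unif: "\<forall>j. distr M borel (U j) = uniform_measure lborel {0..<1::real}"
    and good: "E_abs_theta0 M P A \<tau> U < \<infinity>"
  shows "measure M {\<omega> \<in> space M. enat i < Lk P A \<tau> U 0 \<omega>}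
           \<le> (enn2real (E_abs_theta0 M P A \<tau> U) + 1) *
              measure M {\<omega> \<in> space M. alpha_ki P A \<tau> (cn P A \<tau> U (-1) \<omega>) (int i) \<le> U 0 \<omega>}
       \<and> measure M {\<omega> \<in> space M. Lk P A \<tau> U 0 \<omega> \<le> enat i} \<ge> alpha_m1 P A
       \<and> measure M {\<omega> \<in> space M. Lk P A \<tau> U 0 \<omega> \<le> enat i}
           \<ge> max (1 - (enn2real (E_abs_theta0 M P A \<tau> U) + 1) *
                      measure M {\<omega> \<in> space M. alpha_ki P A \<tau> (cn P A \<tau> U (-1) \<omega>) (int i) \<le> U 0 \<omega>})
                  (alpha_m1 P A)"
proof -
  have "1 \<in> A" using alphabet by auto
  then interpret uniform_coupling P A \<tau> M U
    using ps kernel_range kernel_sum skel indep unif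
    by (simp add: uniform_coupling_def uniform_coupling_axioms_def tree_kernel_def skeleton_def)
  have tail_bound: "prob {\<omega>\<in>space M. enat i < Lk P A \<tau> U 0 \<omega>}
      \<le> (enn2real (E_abs_theta0 M P A \<tau> U) + 1) *
         prob {\<omega> \<in> space M. alpha_ki P A \<tau> (cn P A \<tau> U (-1) \<omega>) (int i) \<le> U 0 \<omega>}"
    using prob_L0_gt_le[OF good] unfolding exceed_event_0 .
  show ?thesis using tail_bound prob_L0_le_ge_alpha_m1[of i] prob_L0_le_compl[of i] by auto
qed

end
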